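(* Let $p\in[1,\infty]$, $W^{(1)}\in\mathbb{R}^{n_1\times n_0}$, $W^{(2)}\in\mathbb{R}^{n_2\times n_1}$, and let $\alpha,\beta\in\mathbb{R}^{n_1}$ satisfy $0\le\alpha_i\le\beta_i<\infty$ for all $i$. For $d\in\mathbb{R}^{n_1}_+$ define $$L(d)=\|W^{(2)}\|_p\,\big\|\mathrm{diag}\big(\max(|\beta-d|,|d-\alpha|)\big)W^{(1)}\big\|_p+\|W^{(2)}\mathrm{diag}(d)W^{(1)}\|_p,$$ with $\max$ and $|\cdot|$ taken elementwise. Then $L(\beta/2)\le L(0)$.
   Context: $\|A\|_p=\sup_{\|x\|_p\le1}\|Ax\|_p$ denotes the induced operator norm of a matrix $A$. (In the paper, $L(d)$ is a Lipschitz constant of the two-layer network $x\mapsto W^{(2)}\sigma(W^{(1)}x)$ whose activations $\sigma_i$ are slope-restricted in $[\alpha_i,\beta_i]$, and $L(0)=\|W^{(2)}\|_p\|\mathrm{diag}(\beta)W^{(1)}\|_p$ is the naive bound.) *)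

theory Defs
  imports "HOL-Analysis.Analysis"
begin

definition vpnorm :: "ereal \<Rightarrow> real^'n \<Rightarrow> real" where
  "vpnorm p x = (if p = \<infinity> then Max (range (\<lambda>i. \<bar>x $ i\<bar>))
     else (\<Sum>i\<in>UNIV. \<bar>x $ i\<bar> powr real_of_ereal p) powr (1 / real_of_ereal p))"

definition oppnorm :: "ereal \<Rightarrow> real^'n^'m \<Rightarrow> real" where
  "oppnorm p A = Sup ((\<lambda>x. vpnorm p (A *v x)) ` {x. vpnorm p x \<le> 1})"

definition diagm :: "real^'n \<Rightarrow> real^'n^'n" where
  "diagm v = (\<chi> i j. if i = j then v $ i else 0)"

definition Lbound :: "ereal \<Rightarrow> real^'n0^'n1 \<Rightarrow> real^'n1^'n2 \<Rightarrow> real^'n1 \<Rightarrow> real^'n1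
     \<Rightarrow> real^'n1 \<Rightarrow> real" where
  "Lbound p W1 W2 \<alpha> \<beta> d =
     oppnorm p W2 * oppnorm p (diagm (\<chi> i. max \<bar>\<beta> $ i - d $ i\<bar> \<bar>d $ i - \<alpha> $ i\<bar>) ** W1)
     + oppnorm p (W2 ** diagm d ** W1)"

end

theory Submission
  imports Defs
begin

text \<open>At \<open>d = \<beta>/2\<close> the hypothesis \<open>0 \<le> \<alpha> \<le> \<beta>\<close> makes the elementwise radius
  \<open>max(|\<beta> - d|, |d - \<alpha>|)\<close> equal to \<open>\<beta>/2\<close>.  By homogeneity and submultiplicativity of the
  induced norm, each of the two terms of \<open>L(\<beta>/2)\<close> is then at most
  \<open>\<parallel>W\<^sub>2\<parallel> \<parallel>diag(\<beta>) W\<^sub>1\<parallel> / 2\<close>, while \<open>L(0)\<close> is at least \<open>\<parallel>W\<^sub>2\<parallel> \<parallel>diag(\<beta>) W\<^sub>1\<parallel>\<close>.\<close>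

lemma real_of_ereal_ge_1: "1 \<le> p \<Longrightarrow> p \<noteq> \<infinity> \<Longrightarrow> 1 \<le> real_of_ereal p"
  by (cases p) auto

lemma abs_le_vpnorm:
  fixes x :: "real^'n"
  assumes "1 \<le> p"
  shows "\<bar>x $ i\<bar> \<le> vpnorm p x"
proof (cases "p = \<infinity>")
  case True
  then show ?thesis by (simp add: vpnorm_def)
next
  case False
  define q where "q = real_of_ereal p"
  have q: "1 \<le> q" using real_of_ereal_ge_1[OF assms False] by (simp add: q_def)
  have "\<bar>x $ i\<bar> = (\<bar>x $ i\<bar> powr q) powr (1/q)"
    using q by (simp add: powr_powr)
  also have "\<dots> \<le> (\<Sum>j\<in>UNIV. \<bar>x $ j\<bar> powr q) powr (1/q)"
    using q by (intro powr_mono2) (auto intro: member_le_sum)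
  finally show ?thesis using False by (simp add: vpnorm_def q_def)
qed

lemma vpnorm_nonneg: "1 \<le> p \<Longrightarrow> 0 \<le> vpnorm p (x :: real^'n)"
  using abs_le_vpnorm abs_ge_zero order_trans by blast

lemma vpnorm_mono:
  fixes x y :: "real^'n"
  assumes "1 \<le> p" and le: "\<And>i. \<bar>x $ i\<bar> \<le> \<bar>y $ i\<bar>"
  shows "vpnorm p x \<le> vpnorm p y"
proof (cases "p = \<infinity>")
  case True
  have "\<bar>x $ i\<bar> \<le> Max (range (\<lambda>i. \<bar>y $ i\<bar>))" for i
    using le[of i] by (meson Max_ge finite finite_imageI order_trans rangeI)
  then show ?thesis using True by (simp add: vpnorm_def)
next
  case False
  define q where "q = real_of_ereal p"
  have q: "1 \<le> q" using real_of_ereal_ge_1[OF assms(1) False] by (simp add: q_def)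
  have "(\<Sum>i\<in>UNIV. \<bar>x $ i\<bar> powr q) \<le> (\<Sum>i\<in>UNIV. \<bar>y $ i\<bar> powr q)"
    using q le by (intro sum_mono powr_mono2) auto
  then have "(\<Sum>i\<in>UNIV. \<bar>x $ i\<bar> powr q) powr (1/q) \<le> (\<Sum>i\<in>UNIV. \<bar>y $ i\<bar> powr q) powr (1/q)"
    using q by (intro powr_mono2) (auto simp: sum_nonneg)
  then show ?thesis using False by (simp add: vpnorm_def q_def)
qed

lemma vpnorm_scaleR:
  fixes x :: "real^'n"
  assumes "1 \<le> p"
  shows "vpnorm p (c *\<^sub>R x) = \<bar>c\<bar> * vpnorm p x"
proof (cases "p = \<infinity>")
  case True
  have "Max (range (\<lambda>i. \<bar>(c *\<^sub>R x) $ i\<bar>)) = Max ((\<lambda>t. \<bar>c\<bar> * t) ` range (\<lambda>i. \<bar>x $ i\<bar>))"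
    by (simp add: image_image abs_mult)
  also have "\<dots> = \<bar>c\<bar> * Max (range (\<lambda>i. \<bar>x $ i\<bar>))"
    by (rule mono_Max_commute[symmetric]) (auto simp: mono_def mult_left_mono)
  finally show ?thesis using True by (simp add: vpnorm_def)
next
  case False
  define q where "q = real_of_ereal p"
  have q: "1 \<le> q" using real_of_ereal_ge_1[OF assms False] by (simp add: q_def)
  have "(\<Sum>j\<in>UNIV. \<bar>(c *\<^sub>R x) $ j\<bar> powr q) powr (1/q)
      = (\<bar>c\<bar> powr q) powr (1/q) * (\<Sum>j\<in>UNIV. \<bar>x $ j\<bar> powr q) powr (1/q)"
    by (simp add: abs_mult powr_mult sum_distrib_left[symmetric] sum_nonneg)
  also have "(\<bar>c\<bar> powr q) powr (1/q) = \<bar>c\<bar>"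
    using q by (simp add: powr_powr)
  finally show ?thesis using False by (simp add: vpnorm_def q_def)
qed

lemma vpnorm_zero: "1 \<le> p \<Longrightarrow> vpnorm p (0 :: real^'n) = 0"
  using vpnorm_scaleR[of p 0 0] by simp

lemma vpnorm_eq_0_iff:
  fixes x :: "real^'n"
  assumes "1 \<le> p"
  shows "vpnorm p x = 0 \<longleftrightarrow> x = 0"
proof
  assume "vpnorm p x = 0"
  then show "x = 0"
    using abs_le_vpnorm[OF assms, of x] by (simp add: vec_eq_iff)
qed (simp add: vpnorm_zero[OF assms])

lemma abs_matrix_vector_mult_le:
  fixes A :: "real^'n^'m" and x :: "real^'n"
  assumes "\<And>j. \<bar>x $ j\<bar> \<le> 1"
  shows "\<bar>(A *v x) $ i\<bar> \<le> (\<Sum>j\<in>UNIV. \<bar>A $ i $ j\<bar>)"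
proof -
  have "\<bar>(A *v x) $ i\<bar> \<le> (\<Sum>j\<in>UNIV. \<bar>A $ i $ j\<bar> * \<bar>x $ j\<bar>)"
    by (simp add: matrix_vector_mult_def sum_abs flip: abs_mult)
  also have "\<dots> \<le> (\<Sum>j\<in>UNIV. \<bar>A $ i $ j\<bar>)"
    using assms by (intro sum_mono) (simp add: mult_left_le)
  finally show ?thesis .
qed

lemma bdd_above_oppnorm_set:
  fixes A :: "real^'n^'m"
  assumes "1 \<le> p"
  shows "bdd_above ((\<lambda>x. vpnorm p (A *v x)) ` {x. vpnorm p x \<le> 1})"
proof (rule bdd_aboveI2)
  fix x :: "real^'n"
  assume "x \<in> {x. vpnorm p x \<le> 1}"
  then have "\<bar>x $ j\<bar> \<le> 1" for j
    using abs_le_vpnorm[OF assms, of x j] by simp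
  then show "vpnorm p (A *v x) \<le> vpnorm p (\<chi> i. \<Sum>j\<in>UNIV. \<bar>A $ i $ j\<bar>)"
    using abs_matrix_vector_mult_le by (intro vpnorm_mono[OF assms]) force
qed

lemma vpnorm_le_oppnorm:
  fixes A :: "real^'n^'m"
  assumes "1 \<le> p" "vpnorm p x \<le> 1"
  shows "vpnorm p (A *v x) \<le> oppnorm p A"
  unfolding oppnorm_def
  using assms(2) by (intro cSup_upper bdd_above_oppnorm_set[OF assms(1)]) blast

lemma oppnorm_le:
  fixes A :: "real^'n^'m"
  assumes "1 \<le> p" "\<And>x. vpnorm p x \<le> 1 \<Longrightarrow> vpnorm p (A *v x) \<le> C"
  shows "oppnorm p A \<le> C"
proof -
  have "0 \<in> {x::real^'n. vpnorm p x \<le> 1}"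
    by (simp add: vpnorm_zero[OF assms(1)])
  then show ?thesis
    unfolding oppnorm_def using assms(2) by (intro cSup_least) auto
qed

lemma oppnorm_nonneg:
  fixes A :: "real^'n^'m"
  assumes "1 \<le> p"
  shows "0 \<le> oppnorm p A"
  using vpnorm_le_oppnorm[OF assms, of 0 A] vpnorm_nonneg[OF assms, of "A *v 0"]
  by (simp add: vpnorm_zero[OF assms])

lemma vpnorm_matrix_vector_mult_le:
  fixes A :: "real^'n^'m"
  assumes "1 \<le> p"
  shows "vpnorm p (A *v y) \<le> oppnorm p A * vpnorm p y"
proof (cases "y = 0")
  case True
  then show ?thesis by (simp add: vpnorm_zero[OF assms])
next
  case False
  define t where "t = vpnorm p y"
  have t: "0 < t"
    using False vpnorm_eq_0_iff[OF assms, of y] vpnorm_nonneg[OF assms, of y]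
    by (simp add: t_def)
  have "vpnorm p ((1/t) *\<^sub>R y) = 1"
    using t by (simp add: vpnorm_scaleR[OF assms] t_def)
  then have "vpnorm p (A *v ((1/t) *\<^sub>R y)) \<le> oppnorm p A"
    by (intro vpnorm_le_oppnorm[OF assms]) simp
  then have "vpnorm p (A *v y) / t \<le> oppnorm p A"
    using t by (simp add: vpnorm_scaleR[OF assms] matrix_vector_mult_scaleR)
  then show ?thesis
    using t by (simp add: t_def field_simps)
qed

lemma oppnorm_matrix_mul_le:
  fixes A :: "real^'n^'m" and B :: "real^'k^'n"
  assumes "1 \<le> p"
  shows "oppnorm p (A ** B) \<le> oppnorm p A * oppnorm p B"
proof (rule oppnorm_le[OF assms])
  fix x :: "real^'k"
  assume x: "vpnorm p x \<le> 1"
  have "vpnorm p ((A ** B) *v x) = vpnorm p (A *v (B *v x))"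
    by (simp add: matrix_vector_mul_assoc)
  also have "\<dots> \<le> oppnorm p A * vpnorm p (B *v x)"
    by (rule vpnorm_matrix_vector_mult_le[OF assms])
  also have "\<dots> \<le> oppnorm p A * oppnorm p B"
    by (intro mult_left_mono vpnorm_le_oppnorm[OF assms x] oppnorm_nonneg[OF assms])
  finally show "vpnorm p ((A ** B) *v x) \<le> oppnorm p A * oppnorm p B" .
qed

lemma oppnorm_scaleR_le:
  fixes A :: "real^'n^'m"
  assumes "1 \<le> p"
  shows "oppnorm p (c *\<^sub>R A) \<le> \<bar>c\<bar> * oppnorm p A"
proof (rule oppnorm_le[OF assms])
  fix x :: "real^'n"
  assume "vpnorm p x \<le> 1"
  then show "vpnorm p ((c *\<^sub>R A) *v x) \<le> \<bar>c\<bar> * oppnorm p A"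
    by (simp add: scaleR_matrix_vector_assoc[symmetric] vpnorm_scaleR[OF assms]
        mult_left_mono vpnorm_le_oppnorm[OF assms])
qed

lemma diagm_scaleR: "diagm (c *\<^sub>R v) = c *\<^sub>R diagm v"
  by (simp add: vec_eq_iff diagm_def)

lemma max_abs_half_radius:
  fixes a b :: real
  assumes "0 \<le> a" "a \<le> b"
  shows "max \<bar>b - b/2\<bar> \<bar>b/2 - a\<bar> = b/2"
  using assms by (auto simp: max_def abs_if)

theorem theorem1:
  fixes p :: ereal
    and W1 :: "real^'n0^'n1" and W2 :: "real^'n1^'n2"
    and \<alpha> \<beta> :: "real^'n1"
  assumes "1 \<le> p"
    and "\<And>i. 0 \<le> \<alpha> $ i" and "\<And>i. \<alpha> $ i \<le> \<beta> $ i"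
  shows "Lbound p W1 W2 \<alpha> \<beta> ((1/2) *\<^sub>R \<beta>) \<le> Lbound p W1 W2 \<alpha> \<beta> 0"
proof -
  define B where "B = diagm \<beta> ** W1"
  have radius_half: "(\<chi> i. max \<bar>\<beta> $ i - ((1/2) *\<^sub>R \<beta>) $ i\<bar> \<bar>((1/2) *\<^sub>R \<beta>) $ i - \<alpha> $ i\<bar>)
      = (1/2::real) *\<^sub>R \<beta>"
    using max_abs_half_radius[OF assms(2,3)] by (simp add: vec_eq_iff)
  have radius_0: "(\<chi> i. max \<bar>\<beta> $ i - (0::real^'n1) $ i\<bar> \<bar>(0::real^'n1) $ i - \<alpha> $ i\<bar>) = \<beta>"
  proof -
    have "max \<bar>\<beta> $ i\<bar> \<bar>\<alpha> $ i\<bar> = \<beta> $ i" for i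
      using assms(2,3)[of i] by simp
    then show ?thesis by (simp add: vec_eq_iff)
  qed
  have half_B: "oppnorm p ((1/2::real) *\<^sub>R B) \<le> oppnorm p B / 2"
    using oppnorm_scaleR_le[OF assms(1), of "1/2" B] by simp
  have "Lbound p W1 W2 \<alpha> \<beta> ((1/2) *\<^sub>R \<beta>)
      = oppnorm p W2 * oppnorm p ((1/2::real) *\<^sub>R B) + oppnorm p (W2 ** ((1/2::real) *\<^sub>R B))"
    unfolding Lbound_def radius_half
    by (simp add: diagm_scaleR B_def scalar_matrix_assoc matrix_mul_assoc)
  also have "\<dots> \<le> 2 * (oppnorm p W2 * oppnorm p ((1/2::real) *\<^sub>R B))"
    using oppnorm_matrix_mul_le[OF assms(1), of W2] by simp
  also have "\<dots> \<le> oppnorm p W2 * oppnorm p B"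
    using mult_left_mono[OF half_B oppnorm_nonneg[OF assms(1), of W2]] by simp
  also have "\<dots> \<le> Lbound p W1 W2 \<alpha> \<beta> 0"
    unfolding Lbound_def radius_0 B_def by (simp add: oppnorm_nonneg[OF assms(1)])
  finally show ?thesis .
qed

end
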